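(* Let $G$ be a connected graph of order $n$ without isolated vertices and with maximum degree $\Delta(G)=n-1$. Then $\chi_{dom}(G)=\chi_d^t(G)=\chi(G)$.
   Context: All graphs are finite and simple. A proper coloring of $G$ partitions $V(G)$ into independent color classes; $\chi(G)$ is the chromatic number. A dominated coloring (dom-coloring) of $G$ is a proper coloring in which every color class is dominated by at least one vertex, i.e. for each color class $C$ there is a vertex of $G$ adjacent to every vertex of $C$; $\chi_{dom}(G)$ is the minimum number of colors in a dominated coloring. For $G$ without isolated vertices, a total dominator coloring is a proper coloring in which every vertex is adjacent to every vertex of some color class other than its own; $\chi_d^t(G)$ is the minimum number of colors in such a coloring. *)

theory Defs
  imports Main
begin

definition simple_graph :: "'a set \<Rightarrow> ('a \<Rightarrow> 'a \<Rightarrow> bool) \<Rightarrow> bool" where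
  "simple_graph V E \<longleftrightarrow> finite V \<and> (\<forall>u v. E u v \<longrightarrow> u \<in> V \<and> v \<in> V)
     \<and> (\<forall>u v. E u v \<longrightarrow> E v u) \<and> (\<forall>v. \<not> E v v)"

definition connected_graph :: "'a set \<Rightarrow> ('a \<Rightarrow> 'a \<Rightarrow> bool) \<Rightarrow> bool" where
  "connected_graph V E \<longleftrightarrow> (\<forall>u\<in>V. \<forall>v\<in>V. (u, v) \<in> {(x, y). E x y}\<^sup>*)"

definition degree :: "'a set \<Rightarrow> ('a \<Rightarrow> 'a \<Rightarrow> bool) \<Rightarrow> 'a \<Rightarrow> nat" where
  "degree V E v = card {u\<in>V. E v u}"

definition max_degree :: "'a set \<Rightarrow> ('a \<Rightarrow> 'a \<Rightarrow> bool) \<Rightarrow> nat" where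
  "max_degree V E = Max (degree V E ` V)"

definition no_isolated :: "'a set \<Rightarrow> ('a \<Rightarrow> 'a \<Rightarrow> bool) \<Rightarrow> bool" where
  "no_isolated V E \<longleftrightarrow> (\<forall>v\<in>V. \<exists>u\<in>V. E v u)"

definition proper_coloring :: "'a set \<Rightarrow> ('a \<Rightarrow> 'a \<Rightarrow> bool) \<Rightarrow> ('a \<Rightarrow> nat) \<Rightarrow> bool" where
  "proper_coloring V E c \<longleftrightarrow> (\<forall>u\<in>V. \<forall>v\<in>V. E u v \<longrightarrow> c u \<noteq> c v)"

definition color_class :: "'a set \<Rightarrow> ('a \<Rightarrow> nat) \<Rightarrow> nat \<Rightarrow> 'a set" where
  "color_class V c i = {v\<in>V. c v = i}"

definition dom_coloring :: "'a set \<Rightarrow> ('a \<Rightarrow> 'a \<Rightarrow> bool) \<Rightarrow> ('a \<Rightarrow> nat) \<Rightarrow> bool" where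
  "dom_coloring V E c \<longleftrightarrow> proper_coloring V E c \<and>
     (\<forall>i\<in>c ` V. \<exists>w\<in>V. \<forall>v\<in>color_class V c i. E w v)"

definition total_dominator_coloring :: "'a set \<Rightarrow> ('a \<Rightarrow> 'a \<Rightarrow> bool) \<Rightarrow> ('a \<Rightarrow> nat) \<Rightarrow> bool" where
  "total_dominator_coloring V E c \<longleftrightarrow> proper_coloring V E c \<and>
     (\<forall>v\<in>V. \<exists>i\<in>c ` V. i \<noteq> c v \<and> (\<forall>u\<in>color_class V c i. E v u))"

definition chromatic_number :: "'a set \<Rightarrow> ('a \<Rightarrow> 'a \<Rightarrow> bool) \<Rightarrow> nat" where
  "chromatic_number V E = (LEAST k. \<exists>c. proper_coloring V E c \<and> card (c ` V) = k)"

definition dom_chromatic_number :: "'a set \<Rightarrow> ('a \<Rightarrow> 'a \<Rightarrow> bool) \<Rightarrow> nat" where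
  "dom_chromatic_number V E = (LEAST k. \<exists>c. dom_coloring V E c \<and> card (c ` V) = k)"

definition total_dominator_chromatic_number :: "'a set \<Rightarrow> ('a \<Rightarrow> 'a \<Rightarrow> bool) \<Rightarrow> nat" where
  "total_dominator_chromatic_number V E =
     (LEAST k. \<exists>c. total_dominator_coloring V E c \<and> card (c ` V) = k)"

end

theory Submission
  imports Defs
begin

text \<open>A vertex w of degree n - 1 is adjacent to every other vertex, so in every proper colouring
  its colour class is {w}. Then w dominates every other colour class and any neighbour of w
  dominates {w}; likewise every vertex other than w is totally dominated by the class {w},
  and w by any other class. Hence every proper colouring is both a dominated and a total
  dominator colouring, and the three minima coincide.\<close>

definition universal_vertex :: "'a set \<Rightarrow> ('a \<Rightarrow> 'a \<Rightarrow> bool) \<Rightarrow> 'a \<Rightarrow> bool" where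
  "universal_vertex V E w \<longleftrightarrow> w \<in> V \<and> (\<forall>u\<in>V. u \<noteq> w \<longrightarrow> E w u)"

lemma max_degree_attained:
  assumes "finite V" and "V \<noteq> {}"
  obtains w where "w \<in> V" and "degree V E w = max_degree V E"
proof -
  have "max_degree V E \<in> degree V E ` V"
    unfolding max_degree_def using assms by (intro Max_in) auto
  then show thesis using that by (metis imageE)
qed

lemma universal_vertex_if_degree_card_minus_one:
  assumes "simple_graph V E" and "w \<in> V" and "degree V E w = card V - 1"
  shows "universal_vertex V E w"
proof -
  have fin: "finite V" and no_loop: "\<not> E w w"
    using assms(1) unfolding simple_graph_def by blast+
  have "{u\<in>V. E w u} \<subseteq> V - {w}" using no_loop by auto
  moreover have "card (V - {w}) = card {u\<in>V. E w u}"
    using assms(2,3) fin unfolding degree_def by simp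
  ultimately have "{u\<in>V. E w u} = V - {w}"
    using fin by (intro card_subset_eq) auto
  then show ?thesis using assms(2) unfolding universal_vertex_def by blast
qed

lemma color_class_universal_vertex:
  assumes "universal_vertex V E w" and "proper_coloring V E c"
  shows "color_class V c (c w) = {w}"
  using assms unfolding universal_vertex_def proper_coloring_def color_class_def by fastforce

lemma dom_coloring_iff_proper_coloring:
  assumes "simple_graph V E" and "no_isolated V E" and "universal_vertex V E w"
  shows "dom_coloring V E c \<longleftrightarrow> proper_coloring V E c"
proof
  assume proper: "proper_coloring V E c"
  have w: "w \<in> V" and adj: "\<forall>u\<in>V. u \<noteq> w \<longrightarrow> E w u"
    using assms(3) unfolding universal_vertex_def by blast+
  have class_w: "color_class V c (c w) = {w}"
    using color_class_universal_vertex[OF assms(3) proper] .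
  show "dom_coloring V E c"
    unfolding dom_coloring_def
  proof (intro conjI proper ballI)
    fix i assume "i \<in> c ` V"
    show "\<exists>z\<in>V. \<forall>v\<in>color_class V c i. E z v"
    proof (cases "i = c w")
      case True
      obtain x where "x \<in> V" "E w x" using assms(2) w unfolding no_isolated_def by blast
      then have "E x w" using assms(1) unfolding simple_graph_def by blast
      then show ?thesis using True class_w \<open>x \<in> V\<close> by auto
    next
      case False
      then show ?thesis using w adj unfolding color_class_def by auto
    qed
  qed
qed (simp add: dom_coloring_def)

lemma total_dominator_coloring_iff_proper_coloring:
  assumes "simple_graph V E" and "no_isolated V E" and "universal_vertex V E w"
  shows "total_dominator_coloring V E c \<longleftrightarrow> proper_coloring V E c"
proof
  assume proper: "proper_coloring V E c"
  have w: "w \<in> V" and adj: "\<forall>u\<in>V. u \<noteq> w \<longrightarrow> E w u"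
    using assms(3) unfolding universal_vertex_def by blast+
  have class_w: "color_class V c (c w) = {w}"
    using color_class_universal_vertex[OF assms(3) proper] .
  show "total_dominator_coloring V E c"
    unfolding total_dominator_coloring_def
  proof (intro conjI proper ballI)
    fix v assume v: "v \<in> V"
    show "\<exists>i\<in>c ` V. i \<noteq> c v \<and> (\<forall>u\<in>color_class V c i. E v u)"
    proof (cases "v = w")
      case True
      obtain x where x: "x \<in> V" "E w x" using assms(2) w unfolding no_isolated_def by blast
      then have "c w \<noteq> c x" using proper w unfolding proper_coloring_def by blast
      moreover have "\<forall>u\<in>color_class V c (c x). E v u"
        using True adj \<open>c w \<noteq> c x\<close> unfolding color_class_def by auto
      ultimately show ?thesis using True x(1) by (metis image_eqI)
    next
      case False
      then have "E v w" using adj v assms(1) unfolding simple_graph_def by blast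
      then have "c w \<noteq> c v" using proper v w unfolding proper_coloring_def by metis
      then show ?thesis using w class_w \<open>E v w\<close> by auto
    qed
  qed
qed (simp add: total_dominator_coloring_def)

theorem mainTheorem1:
  fixes V :: "'a set" and E :: "'a \<Rightarrow> 'a \<Rightarrow> bool" and n :: nat
  assumes "simple_graph V E"
    and "V \<noteq> {}"
    and "card V = n"
    and "connected_graph V E"
    and "no_isolated V E"
    and "max_degree V E = n - 1"
  shows "dom_chromatic_number V E = chromatic_number V E
       \<and> total_dominator_chromatic_number V E = chromatic_number V E"
proof -
  have "finite V" using assms(1) unfolding simple_graph_def by blast
  then obtain w where "w \<in> V" and "degree V E w = card V - 1"
    using max_degree_attained assms(2,3,6) by metis
  then have universal: "universal_vertex V E w"
    by (rule universal_vertex_if_degree_card_minus_one[OF assms(1)])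
  have "dom_coloring V E = proper_coloring V E"
    by (rule ext) (rule dom_coloring_iff_proper_coloring[OF assms(1,5) universal])
  moreover have "total_dominator_coloring V E = proper_coloring V E"
    by (rule ext) (rule total_dominator_coloring_iff_proper_coloring[OF assms(1,5) universal])
  ultimately show ?thesis
    unfolding dom_chromatic_number_def total_dominator_chromatic_number_def
      chromatic_number_def by simp
qed

end
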